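(* Let $C=L_1;\ldots;L_d$ be a sorting network of depth $d\ge2$ on $n$ channels containing no redundant comparators. Then every comparator $(i,j)\in L_{d-1}$ satisfies $j-i\le3$. Furthermore, if $j=i+2$ then $(i,i+1)\in L_d$ or $(i+1,i+2)\in L_d$; and if $j=i+3$ then both $(i,i+1)\in L_d$ and $(i+2,i+3)\in L_d$.
   Context: Channels are numbered $1,\ldots,n$. A comparator network of depth $d$ is a sequence $C=L_1;\ldots;L_d$ of layers; each layer is a set of comparators $(i,j)$ with $1\le i<j\le n$, each channel occurring in at most one comparator of a layer. An input $\bar x\in\{0,1\}^n$ propagates: $\bar x_0=\bar x$, and $\bar x_k$ is obtained from $\bar x_{k-1}$ by, for each $(i,j)\in L_k$, putting the minimum of the values at positions $i,j$ at position $i$ and the maximum at position $j$. The output is $C(\bar x)=\bar x_d$; $C$ is a sorting network if $C(\bar x)$ is sorted non-decreasingly for all $\bar x\in\{0,1\}^n$. A comparator $(i,j)\in L_\ell$ is redundant if for every input $\bar x$ we have $(\bar x_{\ell-1})_i\le(\bar x_{\ell-1})_j$. *)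

theory Defs
  imports Main
begin

(* A comparator is a pair (i,j); a layer is a set of comparators;
   a network is a list of layers L_1 ... L_d (list index k-1 holds L_k).
   Inputs are functions from channels to values; a 0/1 input on n channels
   is a function x with x k \<in> {0,1} for k \<in> {1..n} (other positions are
   irrelevant and never touched). *)

type_synonym layer = "(nat \<times> nat) set"
type_synonym network = "layer list"

definition layer_ok :: "nat \<Rightarrow> layer \<Rightarrow> bool" where
  "layer_ok n L \<longleftrightarrow> finite L \<and>
     (\<forall>(i,j)\<in>L. 1 \<le> i \<and> i < j \<and> j \<le> n) \<and>
     (\<forall>c\<in>L. \<forall>c'\<in>L. c \<noteq> c' \<longrightarrow>
        {fst c, snd c} \<inter> {fst c', snd c'} = {})"

definition network_ok :: "nat \<Rightarrow> network \<Rightarrow> bool" where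
  "network_ok n C \<longleftrightarrow> (\<forall>L\<in>set C. layer_ok n L)"

definition apply_layer :: "layer \<Rightarrow> (nat \<Rightarrow> nat) \<Rightarrow> (nat \<Rightarrow> nat)" where
  "apply_layer L x = (\<lambda>k.
     if \<exists>j. (k,j) \<in> L then min (x k) (x (THE j. (k,j) \<in> L))
     else if \<exists>i. (i,k) \<in> L then max (x k) (x (THE i. (i,k) \<in> L))
     else x k)"

definition run :: "network \<Rightarrow> nat \<Rightarrow> (nat \<Rightarrow> nat) \<Rightarrow> (nat \<Rightarrow> nat)" where
  "run C k x = fold apply_layer (take k C) x"

definition binary_input :: "nat \<Rightarrow> (nat \<Rightarrow> nat) \<Rightarrow> bool" where
  "binary_input n x \<longleftrightarrow> (\<forall>k\<in>{1..n}. x k \<in> {0,1})"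

definition sorting_network :: "nat \<Rightarrow> network \<Rightarrow> bool" where
  "sorting_network n C \<longleftrightarrow> network_ok n C \<and>
     (\<forall>x. binary_input n x \<longrightarrow>
        (\<forall>i j. 1 \<le> i \<longrightarrow> i \<le> j \<longrightarrow> j \<le> n \<longrightarrow>
           run C (length C) x i \<le> run C (length C) x j))"

definition redundant :: "nat \<Rightarrow> network \<Rightarrow> nat \<Rightarrow> nat \<times> nat \<Rightarrow> bool" where
  "redundant n C l c \<longleftrightarrow> (\<forall>x. binary_input n x \<longrightarrow>
      run C (l - 1) x (fst c) \<le> run C (l - 1) x (snd c))"

definition no_redundant :: "nat \<Rightarrow> network \<Rightarrow> bool" where
  "no_redundant n C \<longleftrightarrow>
     (\<forall>l\<in>{1..length C}. \<forall>c\<in>C ! (l - 1). \<not> redundant n C l c)"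

end

theory Submission
  imports Defs
begin

text \<open>
  Take a non-redundant comparator \<open>(i, j)\<close> of some layer and two output channels \<open>p\<close>, \<open>q\<close>
  such that the final value at \<open>p\<close> dominates the value at \<open>i\<close> right after that layer, and the
  final value at \<open>q\<close> is dominated by the value at \<open>j\<close>. Non-redundancy gives a 0/1 input on
  which the comparator sees 1 at \<open>i\<close> and 0 at \<open>j\<close>. Changing the input one bit at a time towards
  the sorted input with \<open>p + 1\<close> zeros, this inversion survives every step: by monotonicity only
  one of the two values can change, and if it did, the comparator would send 1 to \<open>i\<close> (hence
  to \<open>p\<close>) while at least \<open>p\<close> zeros remain, or 0 to \<open>j\<close> (hence to \<open>q\<close>) while at most \<open>p + 1\<close>
  zeros remain. A sorted input passes unchanged, so \<open>q \<le> p + 1\<close>.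

  Applied to the last layer this shows all its comparators join adjacent channels. Applied to
  the penultimate layer with \<open>p\<close>, \<open>q\<close> the channels to which the last layer moves \<open>i\<close> upwards
  and \<open>j\<close> downwards it gives \<open>j - i \<le> 1 + [i moves] + [j moves]\<close>.
\<close>

definition zero_count :: "nat \<Rightarrow> (nat \<Rightarrow> nat) \<Rightarrow> nat" where
  "zero_count n x = card {k\<in>{1..n}. x k = 0}"

definition sorted_on :: "nat \<Rightarrow> (nat \<Rightarrow> nat) \<Rightarrow> bool" where
  "sorted_on n x \<longleftrightarrow> (\<forall>p q. 1 \<le> p \<longrightarrow> p \<le> q \<longrightarrow> q \<le> n \<longrightarrow> x p \<le> x q)"

lemma layer_ok_comparator_channels:
  "layer_ok n L \<Longrightarrow> (i, j) \<in> L \<Longrightarrow> 1 \<le> i \<and> i < j \<and> j \<le> n"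
  unfolding layer_ok_def by auto

lemma network_ok_nth: "network_ok n C \<Longrightarrow> k < length C \<Longrightarrow> layer_ok n (C ! k)"
  unfolding network_ok_def by simp

lemma sorting_network_network_ok: "sorting_network n C \<Longrightarrow> network_ok n C"
  by (simp add: sorting_network_def)

lemma layer_ok_min_end_unique:
  assumes "layer_ok n L" "(k, j) \<in> L" "(k, j') \<in> L" shows "j' = j"
  using assms unfolding layer_ok_def by fastforce

lemma layer_ok_max_end_unique:
  assumes "layer_ok n L" "(i, k) \<in> L" "(i', k) \<in> L" shows "i' = i"
  using assms unfolding layer_ok_def by fastforce

lemma layer_ok_not_min_and_max_end:
  assumes "layer_ok n L" "(i, k) \<in> L" "(k, j) \<in> L" shows False
proof -
  have "(i, k) \<noteq> (k, j)" using assms(1,2) layer_ok_comparator_channels by fastforce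
  with assms show False unfolding layer_ok_def by fastforce
qed

lemma apply_layer_min_end:
  assumes "layer_ok n L" "(k, j) \<in> L"
  shows "apply_layer L x k = min (x k) (x j)"
proof -
  have "(THE j'. (k, j') \<in> L) = j"
    using assms by (auto intro: the_equality layer_ok_min_end_unique)
  then show ?thesis using assms(2) by (auto simp: apply_layer_def)
qed

lemma apply_layer_max_end:
  assumes "layer_ok n L" "(i, k) \<in> L"
  shows "apply_layer L x k = max (x k) (x i)"
proof -
  have "(THE i'. (i', k) \<in> L) = i"
    using assms by (auto intro: the_equality layer_ok_max_end_unique)
  moreover have "\<not> (\<exists>j. (k, j) \<in> L)" using assms layer_ok_not_min_and_max_end by blast
  ultimately show ?thesis using assms(2) by (auto simp: apply_layer_def)
qed

lemma apply_layer_untouched: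
  "\<not> (\<exists>j. (k, j) \<in> L) \<Longrightarrow> \<not> (\<exists>i. (i, k) \<in> L) \<Longrightarrow> apply_layer L x k = x k"
  by (simp add: apply_layer_def)

lemma apply_layer_ge_if_not_min_end:
  assumes "layer_ok n L" "\<not> (\<exists>j. (k, j) \<in> L)"
  shows "x k \<le> apply_layer L x k"
proof (cases "\<exists>i. (i, k) \<in> L")
  case True
  then obtain i where "(i, k) \<in> L" by blast
  then show ?thesis using apply_layer_max_end[OF assms(1)] by simp
qed (use assms apply_layer_untouched in auto)

lemma apply_layer_le_if_not_max_end:
  assumes "layer_ok n L" "\<not> (\<exists>i. (i, k) \<in> L)"
  shows "apply_layer L x k \<le> x k"
proof (cases "\<exists>j. (k, j) \<in> L")
  case True
  then obtain j where "(k, j) \<in> L" by blast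
  then show ?thesis using apply_layer_min_end[OF assms(1)] by simp
qed (use assms apply_layer_untouched in auto)

lemma apply_layer_mono:
  assumes "\<And>k. x k \<le> y k"
  shows "apply_layer L x k \<le> apply_layer L y k"
proof -
  have "min (x a) (x b) \<le> min (y a) (y b)" for a b by (rule min.mono) (simp_all add: assms)
  moreover have "max (x a) (x b) \<le> max (y a) (y b)" for a b by (rule max.mono) (simp_all add: assms)
  ultimately
  show ?thesis unfolding apply_layer_def using assms
    by (simp del: min.bounded_iff max.bounded_iff min_le_iff_disj le_max_iff_disj)
qed

lemma apply_layer_sorted:
  assumes "layer_ok n L" "sorted_on n x"
  shows "apply_layer L x = x"
proof
  fix k
  consider j where "(k, j) \<in> L" | i where "(i, k) \<in> L" | "\<not> (\<exists>j. (k, j) \<in> L)" "\<not> (\<exists>i. (i, k) \<in> L)"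
    by blast
  then show "apply_layer L x k = x k"
  proof cases
    case (1 j)
    then show ?thesis using apply_layer_min_end[OF assms(1) 1] assms
      by (auto simp: sorted_on_def dest: layer_ok_comparator_channels)
  next
    case (2 i)
    then show ?thesis using apply_layer_max_end[OF assms(1) 2] assms
      by (auto simp: sorted_on_def dest: layer_ok_comparator_channels)
  qed (rule apply_layer_untouched)
qed

lemma binary_input_value: "binary_input n x \<Longrightarrow> k \<in> {1..n} \<Longrightarrow> x k = 0 \<or> x k = 1"
  unfolding binary_input_def by blast

lemma apply_layer_binary:
  assumes "layer_ok n L" "binary_input n x"
  shows "binary_input n (apply_layer L x)"
  unfolding binary_input_def
proof
  fix k assume k: "k \<in> {1..n}"
  consider j where "(k, j) \<in> L" | i where "(i, k) \<in> L" | "\<not> (\<exists>j. (k, j) \<in> L)" "\<not> (\<exists>i. (i, k) \<in> L)"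
    by blast
  then show "apply_layer L x k \<in> {0, 1}"
  proof cases
    case (1 j)
    then have "j \<in> {1..n}" using assms(1) layer_ok_comparator_channels by fastforce
    then show ?thesis using apply_layer_min_end[OF assms(1) 1] binary_input_value[OF assms(2)] k
      by (metis insertCI min_def)
  next
    case (2 i)
    then have "i \<in> {1..n}" using assms(1) layer_ok_comparator_channels by fastforce
    then show ?thesis using apply_layer_max_end[OF assms(1) 2] binary_input_value[OF assms(2)] k
      by (metis insertCI max_def)
  qed (use apply_layer_untouched assms(2) k in \<open>auto simp: binary_input_def\<close>)
qed

lemma sum_over_layer_channels:
  assumes "layer_ok n L"
  shows "(\<Sum>k\<in>(\<Union>c\<in>L. {fst c, snd c}). f k) = (\<Sum>c\<in>L. f (fst c) + f (snd c))"
proof -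
  have "finite L" using assms unfolding layer_ok_def by auto
  then have "(\<Sum>k\<in>(\<Union>c\<in>L. {fst c, snd c}). f k) = (\<Sum>c\<in>L. (\<Sum>k\<in>{fst c, snd c}. f k))"
    by (rule sum.UNION_disjoint) (use assms in \<open>auto simp: layer_ok_def\<close>)
  also have "\<dots> = (\<Sum>c\<in>L. f (fst c) + f (snd c))"
    using assms by (intro sum.cong) (auto dest: layer_ok_comparator_channels)
  finally show ?thesis .
qed

lemma apply_layer_sum:
  assumes L: "layer_ok n L"
  shows "(\<Sum>k\<in>{1..n}. apply_layer L x k) = (\<Sum>k\<in>{1..n}. x k)"
proof -
  define E where "E = (\<Union>c\<in>L. {fst c, snd c})"
  have E: "E \<subseteq> {1..n}" using L unfolding E_def by (fastforce dest: layer_ok_comparator_channels)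
  have split: "(\<Sum>k\<in>{1..n}. f k) = (\<Sum>k\<in>{1..n} - E. f k) + (\<Sum>k\<in>E. f k)" for f :: "nat \<Rightarrow> nat"
    by (rule sum.subset_diff[OF E]) simp
  have "(\<Sum>k\<in>{1..n} - E. apply_layer L x k) = (\<Sum>k\<in>{1..n} - E. x k)"
    by (intro sum.cong refl apply_layer_untouched) (force simp: E_def)+
  moreover have "(\<Sum>k\<in>E. apply_layer L x k) = (\<Sum>k\<in>E. x k)"
    unfolding E_def sum_over_layer_channels[OF L]
    by (intro sum.cong refl)
       (auto simp: apply_layer_min_end[OF L] apply_layer_max_end[OF L] min_def max_def)
  ultimately show ?thesis using split[of "apply_layer L x"] split[of x] by simp
qed

lemma run_step:
  assumes "0 < l" "l \<le> length C"
  shows "run C l x = apply_layer (C ! (l - 1)) (run C (l - 1) x)"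
proof -
  have "take l C = take (l - 1) C @ [C ! (l - 1)]"
    using assms take_Suc_conv_app_nth[of "l - 1" C] by simp
  then show ?thesis by (simp add: run_def)
qed

lemma run_invariant:
  assumes "network_ok n C" "P x"
    and "\<And>L y. layer_ok n L \<Longrightarrow> P y \<Longrightarrow> P (apply_layer L y)"
  shows "P (run C m x)"
proof -
  have "P (fold apply_layer Ls y)" if "set Ls \<subseteq> set C" "P y" for Ls y
    using that by (induction Ls arbitrary: y) (use assms(1,3) in \<open>auto simp: network_ok_def\<close>)
  then show ?thesis using assms(2) by (simp add: run_def set_take_subset)
qed

lemma run_mono:
  assumes "\<And>k. x k \<le> y k" shows "run C m x k \<le> run C m y k"
proof -
  have "\<forall>k. fold apply_layer Ls x k \<le> fold apply_layer Ls y k" if "\<forall>k. x k \<le> y k" for Ls x y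
    using that by (induction Ls arbitrary: x y) (simp_all add: apply_layer_mono)
  then show ?thesis using assms by (simp add: run_def)
qed

lemma run_binary: "network_ok n C \<Longrightarrow> binary_input n x \<Longrightarrow> binary_input n (run C m x)"
  by (rule run_invariant) (auto intro: apply_layer_binary)

lemma run_sorted: "network_ok n C \<Longrightarrow> sorted_on n x \<Longrightarrow> run C m x = x"
  by (rule run_invariant[where P = "\<lambda>y. y = x"]) (auto simp: apply_layer_sorted)

lemma run_sum:
  assumes "network_ok n C" shows "(\<Sum>k\<in>{1..n}. run C m x k) = (\<Sum>k\<in>{1..n}. x k)"
proof (rule run_invariant[OF assms, where P = "\<lambda>y. (\<Sum>k\<in>{1..n}. y k) = (\<Sum>k\<in>{1..n}. x k)"])
  fix L y assume "layer_ok n L" "(\<Sum>k\<in>{1..n}. y k) = (\<Sum>k\<in>{1..n}. x k)"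
  then show "(\<Sum>k\<in>{1..n}. apply_layer L y k) = (\<Sum>k\<in>{1..n}. x k)" using apply_layer_sum[of n L y] by simp
qed simp

lemma binary_sum_plus_zero_count:
  assumes "binary_input n x"
  shows "(\<Sum>k\<in>{1..n}. x k) + zero_count n x = n"
proof -
  have "(\<Sum>k\<in>{1..n}. x k) = (\<Sum>k\<in>{1..n}. if x k \<noteq> 0 then 1 else 0)"
    using binary_input_value[OF assms] by (intro sum.cong) fastforce+
  also have "\<dots> = card {k\<in>{1..n}. x k \<noteq> 0}"
    by (simp add: sum.If_cases, rule arg_cong[where f = card], auto)
  also have "\<dots> + zero_count n x = card ({k\<in>{1..n}. x k \<noteq> 0} \<union> {k\<in>{1..n}. x k = 0})"
    unfolding zero_count_def by (rule card_Un_disjoint[symmetric]) auto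
  also have "{k\<in>{1..n}. x k \<noteq> 0} \<union> {k\<in>{1..n}. x k = 0} = {1..n}" by auto
  finally show ?thesis by simp
qed

lemma run_zero_count:
  assumes "network_ok n C" "binary_input n x"
  shows "zero_count n (run C m x) = zero_count n x"
  using binary_sum_plus_zero_count[OF assms(2)] binary_sum_plus_zero_count[OF run_binary[OF assms, of m]]
    run_sum[OF assms(1), of m x] by linarith

lemma zero_count_raise:
  assumes "r \<in> {1..n}" "x r = 0" shows "zero_count n (x(r := 1)) + 1 = zero_count n x"
proof -
  have "{k\<in>{1..n}. (x(r := 1)) k = 0} = {k\<in>{1..n}. x k = 0} - {r}" by auto
  moreover have "r \<in> {k\<in>{1..n}. x k = 0}" using assms by simp
  ultimately show ?thesis unfolding zero_count_def using card.remove[of "{k\<in>{1..n}. x k = 0}" r] by simp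
qed

lemma zero_count_lower:
  assumes "r \<in> {1..n}" "x r = 1" shows "zero_count n (x(r := 0)) = zero_count n x + 1"
proof -
  have "{k\<in>{1..n}. (x(r := 0)) k = 0} = insert r {k\<in>{1..n}. x k = 0}" using assms by auto
  then show ?thesis unfolding zero_count_def using assms by simp
qed

lemma sorted_binary_zero_iff:
  assumes "binary_input n w" "sorted_on n w" "p \<in> {1..n}"
  shows "w p = 0 \<longleftrightarrow> p \<le> zero_count n w"
proof
  assume "w p = 0"
  then have "{1..p} \<subseteq> {k\<in>{1..n}. w k = 0}"
    using assms unfolding sorted_on_def by (auto, metis le_zero_eq)
  then have "card {1..p} \<le> zero_count n w" unfolding zero_count_def by (intro card_mono) auto
  then show "p \<le> zero_count n w" by simp
next
  assume p: "p \<le> zero_count n w"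
  show "w p = 0"
  proof (rule ccontr)
    assume "w p \<noteq> 0"
    then have "w p = 1" using binary_input_value[OF assms(1,3)] by simp
    have "{k\<in>{1..n}. w k = 0} \<subseteq> {1..p - 1}"
    proof
      fix k assume k: "k \<in> {k\<in>{1..n}. w k = 0}"
      have "\<not> p \<le> k" using assms(2,3) k \<open>w p = 1\<close> unfolding sorted_on_def by fastforce
      then show "k \<in> {1..p - 1}" using k by auto
    qed
    then have "zero_count n w \<le> card {1..p - 1}" unfolding zero_count_def by (intro card_mono) auto
    then show False using p assms(3) by auto
  qed
qed

lemma sorting_network_output_zero_iff:
  assumes "sorting_network n C" "binary_input n x" "p \<in> {1..n}"
  shows "run C (length C) x p = 0 \<longleftrightarrow> p \<le> zero_count n x"
proof -
  note C = sorting_network_network_ok[OF assms(1)]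
  have "sorted_on n (run C (length C) x)"
    using assms(1,2) by (simp add: sorting_network_def sorted_on_def)
  then show ?thesis
    using sorted_binary_zero_iff[OF run_binary[OF C assms(2)] _ assms(3)] run_zero_count[OF C assms(2)]
    by simp
qed

lemma threshold_sorted:
  assumes "\<forall>k\<in>{1..n}. x k = (if k \<le> T then 0 else 1)"
  shows "sorted_on n (x :: nat \<Rightarrow> nat)"
  using assms unfolding sorted_on_def by (metis atLeastAtMost_iff le_trans order.refl zero_le)

lemma card_mismatch_fix_less:
  assumes "finite A" "r \<in> A" "x r \<noteq> t r"
  shows "card {k\<in>A. (x(r := t r)) k \<noteq> t k} < card {k\<in>A. x k \<noteq> t k}"
proof -
  have "{k\<in>A. (x(r := t r)) k \<noteq> t k} = {k\<in>A. x k \<noteq> t k} - {r}" by auto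
  then show ?thesis using assms card_Diff1_less[of "{k\<in>A. x k \<noteq> t k}" r] by simp
qed

lemma threshold_if_zeros_below:
  assumes "binary_input n x" "T \<le> zero_count n x" "\<forall>k\<in>{1..n}. x k = 0 \<longrightarrow> k \<le> T"
  shows "\<forall>k\<in>{1..n}. x k = (if k \<le> T then 0 else 1)"
proof
  have "{k\<in>{1..n}. x k = 0} \<subseteq> {1..T}" using assms(3) by auto
  moreover have "card {1..T} \<le> card {k\<in>{1..n}. x k = 0}" using assms(2) by (simp add: zero_count_def)
  ultimately have zeros: "{k\<in>{1..n}. x k = 0} = {1..T}" by (intro card_seteq) auto
  fix k assume k: "k \<in> {1..n}"
  from zeros have "k \<in> {k\<in>{1..n}. x k = 0} \<longleftrightarrow> k \<in> {1..T}" by simp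
  then have "x k = 0 \<longleftrightarrow> k \<le> T" using k by auto
  then show "x k = (if k \<le> T then 0 else 1)" using binary_input_value[OF assms(1) k] by auto
qed

lemma one_below_if_few_zeros:
  assumes "binary_input n x" "T \<le> n" "zero_count n x < T"
  obtains r where "r \<in> {1..T}" "x r = 1"
proof -
  have "card {k\<in>{1..T}. x k = 0} \<le> zero_count n x"
    unfolding zero_count_def using assms(2) by (intro card_mono) auto
  then have "{k\<in>{1..T}. x k = 0} \<noteq> {1..T}" using assms(3) by auto
  then obtain r where r: "r \<in> {1..T}" "x r \<noteq> 0" by blast
  then have "r \<in> {1..n}" using assms(2) by auto
  then have "x r = 1" using binary_input_value[OF assms(1)] r(2) by fastforce
  with r(1) show thesis by (rule that)
qed

text \<open>Each move fixes one mismatch with the threshold input, and unless \<open>x\<close> already is that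
  input, one of the two kinds of move is available.\<close>

lemma threshold_input_reachable:
  fixes B :: "(nat \<Rightarrow> nat) \<Rightarrow> bool"
  assumes T: "T \<le> n"
    and raise: "\<And>x r. B x \<Longrightarrow> binary_input n x \<Longrightarrow> r \<in> {1..n} \<Longrightarrow> x r = 0 \<Longrightarrow>
                  T \<le> zero_count n x \<Longrightarrow> B (x(r := 1))"
    and lower: "\<And>x r. B x \<Longrightarrow> binary_input n x \<Longrightarrow> r \<in> {1..n} \<Longrightarrow> x r = 1 \<Longrightarrow>
                  zero_count n x < T \<Longrightarrow> B (x(r := 0))"
  shows "B x \<Longrightarrow> binary_input n x \<Longrightarrow>
           \<exists>y. binary_input n y \<and> (\<forall>k\<in>{1..n}. y k = (if k \<le> T then 0 else 1)) \<and> B y"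
proof (induction "card {k\<in>{1..n}. x k \<noteq> (if k \<le> T then 0 else 1)}" arbitrary: x rule: less_induct)
  case (less x)
  let ?t = "\<lambda>k. if k \<le> T then 0 else 1 :: nat"
  have step: "\<exists>y. binary_input n y \<and> (\<forall>k\<in>{1..n}. y k = ?t k) \<and> B y"
    if r: "r \<in> {1..n}" "x r \<noteq> ?t r" and B: "B (x(r := ?t r))" for r
  proof (rule less.hyps[OF _ B])
    show "card {k\<in>{1..n}. (x(r := ?t r)) k \<noteq> ?t k} < card {k\<in>{1..n}. x k \<noteq> ?t k}"
      by (rule card_mismatch_fix_less) (use r in auto)
    show "binary_input n (x(r := ?t r))" using less.prems(2) by (auto simp: binary_input_def)
  qed
  show ?case
  proof (cases "T \<le> zero_count n x")
    case True
    show ?thesis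
    proof (cases "\<exists>r\<in>{1..n}. T < r \<and> x r = 0")
      case True
      then obtain r where r: "r \<in> {1..n}" "T < r" "x r = 0" by blast
      then show ?thesis using step[OF r(1)] raise[OF less.prems r(1,3)] \<open>T \<le> zero_count n x\<close> by simp
    next
      case False
      then have "\<forall>k\<in>{1..n}. x k = 0 \<longrightarrow> k \<le> T" by auto
      then have "\<forall>k\<in>{1..n}. x k = ?t k"
        using threshold_if_zeros_below less.prems(2) \<open>T \<le> zero_count n x\<close> by blast
      then show ?thesis using less.prems by blast
    qed
  next
    case False
    then obtain r where r: "r \<in> {1..T}" "x r = 1"
      using one_below_if_few_zeros[OF less.prems(2) T] by auto
    then have "r \<in> {1..n}" using T by auto
    then show ?thesis using step lower[OF less.prems] False r by simp
  qed
qed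

context
  fixes n l i j p q :: nat and C :: network
  assumes sorting: "sorting_network n C"
    and layer: "0 < l" "l \<le> length C" and comparator: "(i, j) \<in> C ! (l - 1)"
    and channels: "p \<in> {1..n}" "q \<in> {1..n}"
    and min_end_dominated: "\<And>x. run C l x i \<le> run C (length C) x p"
    and max_end_dominates: "\<And>x. run C (length C) x q \<le> run C l x j"
begin

private lemma network: "network_ok n C"
  by (rule sorting_network_network_ok[OF sorting])

private lemma comparator_layer: "layer_ok n (C ! (l - 1))"
  using network_ok_nth[OF network] layer by simp

private lemma comparator_channels: "1 \<le> i" "i < j" "j \<le> n"
  using layer_ok_comparator_channels[OF comparator_layer comparator] by auto

lemma inversion_kept_by_raise:
  assumes x: "binary_input n x" "run C (l - 1) x i = 1" "run C (l - 1) x j = 0"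
    and r: "r \<in> {1..n}" "x r = 0" and zeros: "p + 1 \<le> zero_count n x"
  shows "run C (l - 1) (x(r := 1)) i = 1 \<and> run C (l - 1) (x(r := 1)) j = 0"
proof -
  let ?x = "x(r := 1)"
  let ?y = "run C (l - 1) ?x"
  have bin: "binary_input n ?x" using x(1) by (auto simp: binary_input_def)
  have ybin: "binary_input n ?y" by (rule run_binary[OF network bin])
  have "run C (l - 1) x i \<le> ?y i" by (rule run_mono) (simp add: r(2))
  then have yi: "?y i = 1" using binary_input_value[OF ybin, of i] x(2) comparator_channels by auto
  have "?y j = 0"
  proof (rule ccontr)
    assume "?y j \<noteq> 0"
    then have "?y j = 1" using binary_input_value[OF ybin, of j] comparator_channels by auto
    then have "run C l ?x i = 1"
      using run_step[OF layer] apply_layer_min_end[OF comparator_layer comparator] yi by simp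
    then have "run C (length C) ?x p \<noteq> 0" using min_end_dominated[of ?x] by linarith
    moreover have "p \<le> zero_count n ?x" using zero_count_raise[of r n x, OF r] zeros by simp
    ultimately show False using sorting_network_output_zero_iff[OF sorting bin channels(1)] by simp
  qed
  with yi show ?thesis by simp
qed

lemma inversion_kept_by_lower:
  assumes x: "binary_input n x" "run C (l - 1) x i = 1" "run C (l - 1) x j = 0"
    and r: "r \<in> {1..n}" "x r = 1" and zeros: "zero_count n x < p + 1" and gap: "p + 1 < q"
  shows "run C (l - 1) (x(r := 0)) i = 1 \<and> run C (l - 1) (x(r := 0)) j = 0"
proof -
  let ?x = "x(r := 0)"
  let ?y = "run C (l - 1) ?x"
  have bin: "binary_input n ?x" using x(1) by (auto simp: binary_input_def)
  have ybin: "binary_input n ?y" by (rule run_binary[OF network bin])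
  have "?y j \<le> run C (l - 1) x j" by (rule run_mono) (simp add: r(2))
  then have yj: "?y j = 0" using x(3) by simp
  have "?y i = 1"
  proof (rule ccontr)
    assume "?y i \<noteq> 1"
    then have "?y i = 0" using binary_input_value[OF ybin, of i] comparator_channels by auto
    then have "run C l ?x j = 0"
      using run_step[OF layer] apply_layer_max_end[OF comparator_layer comparator] yj by simp
    then have "run C (length C) ?x q = 0" using max_end_dominates[of ?x] by simp
    moreover have "\<not> q \<le> zero_count n ?x" using zero_count_lower[of r n x, OF r] zeros gap by simp
    ultimately show False using sorting_network_output_zero_iff[OF sorting bin channels(2)] by simp
  qed
  with yj show ?thesis by simp
qed

lemma nonredundant_output_gap:
  assumes "\<not> redundant n C l (i, j)"
  shows "q \<le> p + 1"
proof (rule ccontr)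
  assume "\<not> q \<le> p + 1"
  then have gap: "p + 1 < q" by simp
  let ?inverted = "\<lambda>x. run C (l - 1) x i = 1 \<and> run C (l - 1) x j = 0"
  obtain x where x: "binary_input n x" "run C (l - 1) x j < run C (l - 1) x i"
    using assms unfolding redundant_def by auto
  moreover have "binary_input n (run C (l - 1) x)" by (rule run_binary[OF network x(1)])
  ultimately have "?inverted x" using binary_input_value comparator_channels by fastforce
  then have "\<exists>y. binary_input n y \<and> (\<forall>k\<in>{1..n}. y k = (if k \<le> p + 1 then 0 else 1)) \<and> ?inverted y"
    using threshold_input_reachable[of "p + 1" n ?inverted] x(1) gap channels(2)
      inversion_kept_by_raise inversion_kept_by_lower[OF _ _ _ _ _ _ gap] by simp
  then obtain y where y: "binary_input n y" "\<forall>k\<in>{1..n}. y k = (if k \<le> p + 1 then 0 else 1)"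
    and "?inverted y" by blast
  moreover have "run C (l - 1) y = y" by (rule run_sorted[OF network threshold_sorted[OF y(2)]])
  moreover have "y i \<le> y j" using threshold_sorted[OF y(2)] comparator_channels unfolding sorted_on_def by simp
  ultimately show False by simp
qed

end

lemma no_redundant_nth:
  "no_redundant n C \<Longrightarrow> 0 < l \<Longrightarrow> l \<le> length C \<Longrightarrow> c \<in> C ! (l - 1) \<Longrightarrow> \<not> redundant n C l c"
  unfolding no_redundant_def by (auto simp: Suc_le_eq)

lemma last_layer_comparators_adjacent:
  assumes sorting: "sorting_network n C" and "no_redundant n C"
    and "0 < length C" and c: "(i, j) \<in> C ! (length C - 1)"
  shows "j = i + 1"
proof -
  have "layer_ok n (C ! (length C - 1))"
    using network_ok_nth[OF sorting_network_network_ok[OF sorting]] assms(3) by simp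
  then have ij: "1 \<le> i" "i < j" "j \<le> n" using c layer_ok_comparator_channels by auto
  have "\<not> redundant n C (length C) (i, j)" using no_redundant_nth assms(2-4) by blast
  then have "j \<le> i + 1" using nonredundant_output_gap[OF sorting _ order.refl c] assms(3) ij by simp
  with ij show ?thesis by simp
qed

lemma apply_layer_adjacent_ge:
  assumes "layer_ok n L" "\<forall>(a, b)\<in>L. b = a + 1"
  shows "x i \<le> apply_layer L x (if (i, i + 1) \<in> L then i + 1 else i)"
proof (cases "(i, i + 1) \<in> L")
  case False
  then have "\<not> (\<exists>b. (i, b) \<in> L)" using assms(2) by fastforce
  then show ?thesis using False apply_layer_ge_if_not_min_end[OF assms(1)] by simp
qed (simp add: apply_layer_max_end[OF assms(1)])

lemma apply_layer_adjacent_le: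
  assumes "layer_ok n L" "\<forall>(a, b)\<in>L. b = a + 1"
  shows "apply_layer L x (if (j - 1, j) \<in> L then j - 1 else j) \<le> x j"
proof (cases "(j - 1, j) \<in> L")
  case False
  then have "\<not> (\<exists>a. (a, j) \<in> L)" using assms(2) by fastforce
  then show ?thesis using False apply_layer_le_if_not_max_end[OF assms(1)] by simp
qed (simp add: apply_layer_min_end[OF assms(1)])

lemma penultimate_comparator_span:
  assumes sorting: "sorting_network n C" and nr: "no_redundant n C"
    and len: "2 \<le> length C" and c: "(i, j) \<in> C ! (length C - 2)"
  shows "j \<le> i + 1 + (if (i, i + 1) \<in> C ! (length C - 1) then 1 else 0)
                   + (if (j - 1, j) \<in> C ! (length C - 1) then 1 else 0)"
proof -
  let ?M = "C ! (length C - 1)"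
  define p where "p = (if (i, i + 1) \<in> ?M then i + 1 else i)"
  define q where "q = (if (j - 1, j) \<in> ?M then j - 1 else j)"
  have pos: "0 < length C" using len by linarith
  note net = sorting_network_network_ok[OF sorting]
  have M: "layer_ok n ?M" using network_ok_nth[OF net] pos by simp
  have adjacent: "\<forall>(a, b)\<in>?M. b = a + 1"
  proof clarify
    fix a b assume "(a, b) \<in> ?M"
    then show "b = a + 1" using last_layer_comparators_adjacent[OF sorting nr pos] by blast
  qed
  have c': "(i, j) \<in> C ! (length C - 1 - 1)" using c by (simp add: numeral_2_eq_2)
  have ij: "1 \<le> i" "i < j" "j \<le> n"
    using layer_ok_comparator_channels[OF network_ok_nth[OF net] c] len by auto
  have last: "run C (length C) x = apply_layer ?M (run C (length C - 1) x)" for x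
    using run_step[OF pos order.refl] by simp
  have l: "0 < length C - 1" "length C - 1 \<le> length C" using len by auto
  have channels: "p \<in> {1..n}" "q \<in> {1..n}" using ij by (auto simp: p_def q_def)
  have "run C (length C - 1) x i \<le> run C (length C) x p" for x
    unfolding last p_def by (rule apply_layer_adjacent_ge[OF M adjacent])
  moreover have "run C (length C) x q \<le> run C (length C - 1) x j" for x
    unfolding last q_def by (rule apply_layer_adjacent_le[OF M adjacent])
  moreover have "\<not> redundant n C (length C - 1) (i, j)" using no_redundant_nth[OF nr l c'] .
  ultimately have "q \<le> p + 1" by (rule nonredundant_output_gap[OF sorting l c' channels])
  then show ?thesis unfolding p_def q_def using ij by (auto split: if_splits)
qed

theorem corollary2:
  fixes n d :: nat and C :: network
  assumes "sorting_network n C"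
    and "length C = d" and "d \<ge> 2"
    and "no_redundant n C"
  shows "\<forall>(i,j)\<in>C ! (d - 2).
           j - i \<le> 3 \<and>
           (j = i + 2 \<longrightarrow> (i, i+1) \<in> C ! (d - 1) \<or> (i+1, i+2) \<in> C ! (d - 1)) \<and>
           (j = i + 3 \<longrightarrow> (i, i+1) \<in> C ! (d - 1) \<and> (i+2, i+3) \<in> C ! (d - 1))"
proof (intro ballI, clarify)
  fix i j assume "(i, j) \<in> C ! (d - 2)"
  then have "j \<le> i + 1 + (if (i, i + 1) \<in> C ! (d - 1) then 1 else 0)
                       + (if (j - 1, j) \<in> C ! (d - 1) then 1 else 0)"
    using penultimate_comparator_span[OF assms(1,4)] assms(2,3) by simp
  then show "j - i \<le> 3 \<and>
           (j = i + 2 \<longrightarrow> (i, i+1) \<in> C ! (d - 1) \<or> (i+1, i+2) \<in> C ! (d - 1)) \<and>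
           (j = i + 3 \<longrightarrow> (i, i+1) \<in> C ! (d - 1) \<and> (i+2, i+3) \<in> C ! (d - 1))"
    by (auto split: if_splits)
qed

end
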